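(* Let $T$ be a table over schema $U$ with $|T|=n$ and $|U|=m$, let $k,l$ be dimensions with $l\le m$, and let $\mathcal{R}$ be a set of association rules over $T$. Consider the following algorithm. For every subset $U'\subseteq U$ with $|U'|=l$, let $T'$ be the projection of $T$ onto $U'$, and run greedy row selection on $T'$: starting from the empty sub-table, repeat $k$ times: among all tuples of $T'$ not yet selected, add to the current sub-table one whose addition yields the largest cell coverage $\mathrm{cellCov}_{\mathcal{R}}(T,\cdot)$. Among the resulting sub-tables (one per choice of $U'$), output one with the maximal cell coverage. Then the output is a $k\times l$ sub-table $T_{sub}$ of $T$ satisfying $\mathrm{cellCov}_{\mathcal{R}}(T,T_{sub})\geq(1-\frac{1}{e})\,\mathrm{OPT}$, where $\mathrm{OPT}$ is the maximum of $\mathrm{cellCov}_{\mathcal{R}}(T,S)$ over all $k\times l$ sub-tables $S$ of $T$ (the optimal value of the Max-Cell-Cover problem).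
   Context: A schema $U=\{u_1,\dots,u_{|U|}\}$ is a finite set of columns; each column $u_i$ has a domain $\mathcal{D}_i$ of allowed values. A table $T$ over $U$ is a finite set of tuples $t$, each assigning a value $t(u_i)\in\mathcal{D}_i$ to every column $u_i$; the pair $\langle t,u\rangle$ is a cell. A sub-table $T_{sub}$ of $T$ is a table over some schema $U_{sub}\subseteq U$ such that each tuple of $T_{sub}$ is the projection of some tuple of $T$ onto $U_{sub}$; it is of size $k\times l$ if it has $k$ tuples and $|U_{sub}|=l$. An association rule $R$ has the form $\{(u_1,v_1),\dots,(u_{r},v_{r})\}\rightarrow\{(u_{r+1},v_{r+1}),\dots,(u_{r+p},v_{r+p})\}$ with $u_i\in U$ and $v_i\in\mathcal{D}_i$; $U_R=\{u_1,\dots,u_{r+p}\}$ is its set of columns. $R$ holds for a tuple $t$ if $t(u_i)=v_i$ for all $1\le i\le r+p$; $T_R$ is the set of tuples of $T$ for which $R$ holds. A rule $R\in\mathcal{R}$ is covered by $T_{sub}$ if $U_R\subseteq U_{sub}$ and $R$ holds for some tuple of $T_{sub}$; let $\mathcal{R}_{sub}$ be the set of covered rules. Let $\mathrm{cell}(R,T)=\{\langle t,u\rangle : t\in T_R,\ u\in U_R\}$. The cell coverage is $\mathrm{cellCov}_{\mathcal{R}}(T,T_{sub})=\frac{1}{\mathrm{upcov}}\left|\bigcup_{R\in\mathcal{R}_{sub}}\mathrm{cell}(R,T)\right|$, where $\mathrm{upcov}=\left|\bigcup_{R\in\mathcal{R}}\mathrm{cell}(R,T)\right|$. Max-Cell-Cover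 is the problem of finding a $k\times l$ sub-table of $T$ with maximal cell coverage. *)

theory Defs
  imports Complex_Main
begin

text \<open>Tuples are partial maps from columns to values (defined exactly on the schema).
  An association rule is a pair (antecedent, consequent) of sets of (column, value) pairs.\<close>

type_synonym ('c,'v) tuple = "'c \<Rightarrow> 'v option"
type_synonym ('c,'v) rule = "('c \<times> 'v) set \<times> ('c \<times> 'v) set"

definition well_formed_table ::
  "'c set \<Rightarrow> ('c \<Rightarrow> 'v set) \<Rightarrow> ('c,'v) tuple set \<Rightarrow> bool" where
  "well_formed_table U D T \<longleftrightarrow> finite U \<and> finite T \<and>
     (\<forall>t\<in>T. dom t = U \<and> (\<forall>u\<in>U. the (t u) \<in> D u))"

definition rule_cols :: "('c,'v) rule \<Rightarrow> 'c set" where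
  "rule_cols R = fst ` (fst R \<union> snd R)"

definition well_formed_rule ::
  "'c set \<Rightarrow> ('c \<Rightarrow> 'v set) \<Rightarrow> ('c,'v) rule \<Rightarrow> bool" where
  "well_formed_rule U D R \<longleftrightarrow> finite (fst R) \<and> finite (snd R) \<and>
     (\<forall>(u,v)\<in>fst R \<union> snd R. u \<in> U \<and> v \<in> D u)"

definition rule_holds :: "('c,'v) rule \<Rightarrow> ('c,'v) tuple \<Rightarrow> bool" where
  "rule_holds R t \<longleftrightarrow> (\<forall>(u,v)\<in>fst R \<union> snd R. t u = Some v)"

definition proj :: "'c set \<Rightarrow> ('c,'v) tuple \<Rightarrow> ('c,'v) tuple" where
  "proj Us t = t |` Us"

definition is_subtable ::
  "'c set \<Rightarrow> ('c,'v) tuple set \<Rightarrow> ('c,'v) tuple set \<Rightarrow> 'c set \<Rightarrow> bool" where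
  "is_subtable U T S Us \<longleftrightarrow> Us \<subseteq> U \<and> S \<subseteq> proj Us ` T"

definition is_subtable_of_size ::
  "'c set \<Rightarrow> ('c,'v) tuple set \<Rightarrow> nat \<Rightarrow> nat \<Rightarrow> ('c,'v) tuple set \<Rightarrow> 'c set \<Rightarrow> bool" where
  "is_subtable_of_size U T k l S Us \<longleftrightarrow> is_subtable U T S Us \<and> card S = k \<and> card Us = l"

definition rule_covered :: "('c,'v) rule \<Rightarrow> ('c,'v) tuple set \<Rightarrow> 'c set \<Rightarrow> bool" where
  "rule_covered R S Us \<longleftrightarrow> rule_cols R \<subseteq> Us \<and> (\<exists>t\<in>S. rule_holds R t)"

definition cells :: "('c,'v) rule \<Rightarrow> ('c,'v) tuple set \<Rightarrow> (('c,'v) tuple \<times> 'c) set" where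
  "cells R T = {(t,u). t \<in> T \<and> rule_holds R t \<and> u \<in> rule_cols R}"

definition upcov :: "('c,'v) rule set \<Rightarrow> ('c,'v) tuple set \<Rightarrow> nat" where
  "upcov Rs T = card (\<Union>R\<in>Rs. cells R T)"

definition cellCov ::
  "('c,'v) rule set \<Rightarrow> ('c,'v) tuple set \<Rightarrow> ('c,'v) tuple set \<Rightarrow> 'c set \<Rightarrow> real" where
  "cellCov Rs T S Us =
     real (card (\<Union>R\<in>{R\<in>Rs. rule_covered R S Us}. cells R T)) / real (upcov Rs T)"

definition opt_cell_cover ::
  "'c set \<Rightarrow> ('c,'v) rule set \<Rightarrow> ('c,'v) tuple set \<Rightarrow> nat \<Rightarrow> nat \<Rightarrow> real" where
  "opt_cell_cover U Rs T k l =
     Max {cellCov Rs T S Us | S Us. is_subtable_of_size U T k l S Us}"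

text \<open>S is a possible result (for any tie-breaking) of greedy row selection with k
  steps on the projection of T onto Us.\<close>
definition greedy_result ::
  "('c,'v) rule set \<Rightarrow> ('c,'v) tuple set \<Rightarrow> 'c set \<Rightarrow> nat \<Rightarrow> ('c,'v) tuple set \<Rightarrow> bool" where
  "greedy_result Rs T Us k S \<longleftrightarrow>
     (\<exists>f :: nat \<Rightarrow> ('c,'v) tuple set.
        f 0 = {} \<and>
        (\<forall>i<k. \<exists>t\<in>proj Us ` T - f i.
            f (Suc i) = insert t (f i) \<and>
            (\<forall>t'\<in>proj Us ` T - f i.
               cellCov Rs T (insert t' (f i)) Us \<le> cellCov Rs T (insert t (f i)) Us)) \<and>
        S = f k)"

end

theory Submission
  imports Defs
begin

text \<open>For a fixed schema, the cell coverage of a set of rows is a normalised coverage function: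
  row \<open>t\<close> contributes the cells of all rules over the schema that hold for \<open>t\<close>, and a set of
  rows covers the union of the contributions. For coverage functions the value of any set \<open>S\<close>
  exceeds the value of \<open>X\<close> by at most the sum of the marginal gains of the rows of \<open>S\<close>. A
  greedy step takes a row of maximal gain, so it closes at least a \<open>1/k\<close> fraction of the gap to
  any \<open>k\<close>-row set; after \<open>k\<close> steps at most \<open>(1 - 1/k)^k \<le> 1/e\<close> of the gap is left. Running
  greedy on the schema of an optimal sub-table therefore gives \<open>(1 - 1/e) OPT\<close>, and the output
  is at least as good as that run.\<close>

definition coverage :: "('a \<Rightarrow> 'b set) \<Rightarrow> 'a set \<Rightarrow> nat" where
  "coverage A S = card (\<Union>(A ` S))"

lemma mono_scaled_coverage:
  fixes A :: "'a \<Rightarrow> 'b set"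
  assumes "finite (\<Union>(range A))" and "0 \<le> c"
  shows "mono (\<lambda>S. real (coverage A S) / c)"
proof (rule monoI)
  fix X Y :: "'a set"
  assume "X \<subseteq> Y"
  then have "coverage A X \<le> coverage A Y"
    unfolding coverage_def
    by (intro card_mono[OF finite_subset[OF _ assms(1)]]) auto
  then show "real (coverage A X) / c \<le> real (coverage A Y) / c"
    using assms(2) by (simp add: divide_right_mono)
qed

lemma coverage_insert:
  assumes "finite (\<Union>(range A))"
  shows "coverage A (insert s X) = coverage A X + card (A s - \<Union>(A ` X))"
proof -
  have split: "\<Union>(A ` insert s X) = \<Union>(A ` X) \<union> (A s - \<Union>(A ` X))" by blast
  have "finite (\<Union>(A ` X))" "finite (A s - \<Union>(A ` X))"
    by (rule finite_subset[OF _ assms]; blast)+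
  then have "card (\<Union>(A ` X) \<union> (A s - \<Union>(A ` X))) = card (\<Union>(A ` X)) + card (A s - \<Union>(A ` X))"
    by (intro card_Un_disjoint) auto
  then show ?thesis
    by (simp only: coverage_def split)
qed

lemma coverage_le_sum_gains:
  assumes "finite (\<Union>(range A))" and "finite S"
  shows "coverage A S \<le> coverage A X + (\<Sum>s\<in>S - X. card (A s - \<Union>(A ` X)))"
proof -
  let ?UX = "\<Union>(A ` X)"
  have "\<Union>(A ` S) \<subseteq> ?UX \<union> (\<Union>s\<in>S - X. A s - ?UX)" by blast
  then have "coverage A S \<le> card (?UX \<union> (\<Union>s\<in>S - X. A s - ?UX))"
    unfolding coverage_def by (intro card_mono finite_subset[OF _ assms(1)]) auto
  also have "\<dots> \<le> card ?UX + card (\<Union>s\<in>S - X. A s - ?UX)"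
    by (rule card_Un_le)
  also have "card (\<Union>s\<in>S - X. A s - ?UX) \<le> (\<Sum>s\<in>S - X. card (A s - ?UX))"
    using assms(2) by (intro card_UN_le) auto
  finally show ?thesis unfolding coverage_def by simp
qed

lemma scaled_coverage_le_sum_gains:
  fixes A :: "'a \<Rightarrow> 'b set" and c :: real
  defines "F \<equiv> \<lambda>S. real (coverage A S) / c"
  assumes "finite (\<Union>(range A))" and "finite S" and c: "0 \<le> c"
  shows "F S \<le> F X + (\<Sum>s\<in>S - X. F (insert s X) - F X)"
proof -
  have gain: "F (insert s X) - F X = real (card (A s - \<Union>(A ` X))) / c" for s
    unfolding F_def coverage_insert[OF assms(2)] by (simp add: add_divide_distrib)
  have "real (coverage A S) \<le> real (coverage A X) + (\<Sum>s\<in>S - X. real (card (A s - \<Union>(A ` X))))"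
    using coverage_le_sum_gains[OF assms(2,3), of X] by (metis of_nat_add of_nat_le_iff of_nat_sum)
  then have "F S \<le> (real (coverage A X) + (\<Sum>s\<in>S - X. real (card (A s - \<Union>(A ` X))))) / c"
    unfolding F_def using c by (rule divide_right_mono)
  also have "\<dots> = F X + (\<Sum>s\<in>S - X. F (insert s X) - F X)"
    by (simp only: gain) (simp add: F_def add_divide_distrib sum_divide_distrib)
  finally show ?thesis .
qed

definition greedy_chain ::
  "'a set \<Rightarrow> ('a set \<Rightarrow> real) \<Rightarrow> nat \<Rightarrow> (nat \<Rightarrow> 'a set) \<Rightarrow> bool" where
  "greedy_chain V F k f \<longleftrightarrow> f 0 = {} \<and>
     (\<forall>i<k. \<exists>t\<in>V - f i. f (Suc i) = insert t (f i) \<and>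
        (\<forall>t'\<in>V - f i. F (insert t' (f i)) \<le> F (insert t (f i))))"

lemma greedy_chain_step:
  assumes "greedy_chain V F k f" and "i < k"
  obtains t where "t \<in> V - f i" "f (Suc i) = insert t (f i)"
    "\<And>t'. t' \<in> V - f i \<Longrightarrow> F (insert t' (f i)) \<le> F (insert t (f i))"
  using assms unfolding greedy_chain_def by blast

lemma greedy_chain_subset_card:
  assumes "greedy_chain V F k f" and "i \<le> k"
  shows "f i \<subseteq> V \<and> finite (f i) \<and> card (f i) = i"
  using assms(2)
proof (induction i)
  case 0
  then show ?case using assms(1) by (simp add: greedy_chain_def)
next
  case (Suc i)
  then obtain t where "t \<in> V - f i" "f (Suc i) = insert t (f i)"
    using greedy_chain_step[OF assms(1)] by (metis Suc_le_lessD)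
  then show ?case using Suc by auto
qed

lemma greedy_chain_exists:
  assumes "finite V" and "k \<le> card V"
  shows "\<exists>f. greedy_chain V F k f"
  using assms(2)
proof (induction k)
  case 0
  show ?case by (auto simp: greedy_chain_def)
next
  case (Suc k)
  then obtain f where f: "greedy_chain V F k f" by auto
  have "card (f k) = k" "f k \<subseteq> V" using greedy_chain_subset_card[OF f] by auto
  then have "V - f k \<noteq> {}" using Suc.prems by auto
  then obtain t where t: "t \<in> V - f k"
    and t_max: "Max ((\<lambda>t. F (insert t (f k))) ` (V - f k)) = F (insert t (f k))"
    using obtains_MAX[of "V - f k"] assms(1) by blast
  define f' where "f' = f(Suc k := insert t (f k))"
  have "F (insert t' (f k)) \<le> F (insert t (f k))" if "t' \<in> V - f k" for t'
    unfolding t_max[symmetric] using that assms(1) by (intro Max_ge) auto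
  then have "greedy_chain V F (Suc k) f'"
    using f t unfolding greedy_chain_def f'_def by (auto simp: less_Suc_eq)
  then show ?case by blast
qed

lemma greedy_chain_gap_contracts:
  assumes chain: "greedy_chain V F k f" and "mono F"
    and gains: "\<And>X. F S \<le> F X + (\<Sum>s\<in>S - X. F (insert s X) - F X)"
    and S: "S \<subseteq> V" "finite S" "card S = k" and "i < k"
  shows "F S - F (f (Suc i)) \<le> (1 - 1 / real k) * (F S - F (f i))"
proof -
  obtain t where t: "t \<in> V - f i" "f (Suc i) = insert t (f i)"
    and t_max: "\<And>t'. t' \<in> V - f i \<Longrightarrow> F (insert t' (f i)) \<le> F (insert t (f i))"
    using greedy_chain_step[OF chain \<open>i < k\<close>] by blast
  define d where "d = F (f (Suc i)) - F (f i)"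
  have "0 \<le> d" unfolding d_def t(2) using monoD[OF \<open>mono F\<close>] by (simp add: subset_insertI)
  have "F S \<le> F (f i) + (\<Sum>s\<in>S - f i. F (insert s (f i)) - F (f i))" by (rule gains)
  also have "\<dots> \<le> F (f i) + (\<Sum>s\<in>S - f i. d)"
    using S(1) t_max by (intro add_left_mono sum_mono) (auto simp: d_def t(2))
  also have "\<dots> \<le> F (f i) + real k * d"
    using \<open>0 \<le> d\<close> S by (auto intro!: mult_right_mono card_mono)
  finally have "F S - F (f i) \<le> real k * d" by simp
  then show ?thesis
    using \<open>i < k\<close> by (simp add: d_def field_simps)
qed

lemma greedy_chain_approximation:
  assumes chain: "greedy_chain V F k f" and "mono F" and "0 \<le> F {}"
    and gains: "\<And>X. F S \<le> F X + (\<Sum>s\<in>S - X. F (insert s X) - F X)"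
    and S: "S \<subseteq> V" "finite S" "card S = k"
  shows "(1 - 1 / exp 1) * F S \<le> F (f k)"
proof (cases "k = 0")
  case True
  then show ?thesis
    using S chain \<open>0 \<le> F {}\<close> by (simp add: greedy_chain_def algebra_simps)
next
  case False
  define q where "q = 1 - 1 / real k"
  have "0 \<le> q" using False by (simp add: q_def)
  have f0: "f 0 = {}" using chain by (simp add: greedy_chain_def)
  have gap: "F S - F (f i) \<le> q ^ i * (F S - F {})" if "i \<le> k" for i
    using that
  proof (induction i)
    case 0
    then show ?case by (simp add: f0)
  next
    case (Suc i)
    have "F S - F (f (Suc i)) \<le> q * (F S - F (f i))"
      unfolding q_def using Suc.prems
      by (intro greedy_chain_gap_contracts[OF chain \<open>mono F\<close> gains S]) simp
    also have "\<dots> \<le> q * (q ^ i * (F S - F {}))"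
      using Suc \<open>0 \<le> q\<close> by (intro mult_left_mono) auto
    finally show ?case by simp
  qed
  have "q ^ k \<le> 1 / exp 1"
    using exp_ge_one_minus_x_over_n_power_n[of 1 k] False
    by (simp add: q_def exp_minus inverse_eq_divide)
  moreover have "0 \<le> F S - F {}" using monoD[OF \<open>mono F\<close>] by simp
  ultimately have "F S - F (f k) \<le> 1 / exp 1 * (F S - F {})"
    using gap[of k] by (meson mult_right_mono order.trans order_refl)
  moreover have "0 \<le> F {} / exp 1" using \<open>0 \<le> F {}\<close> by simp
  ultimately show ?thesis by (simp add: algebra_simps)
qed

definition tuple_cells ::
  "('c,'v) rule set \<Rightarrow> ('c,'v) tuple set \<Rightarrow> 'c set \<Rightarrow> ('c,'v) tuple \<Rightarrow> (('c,'v) tuple \<times> 'c) set"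
  where
  "tuple_cells Rs T Us t = (\<Union>R\<in>{R\<in>Rs. rule_cols R \<subseteq> Us \<and> rule_holds R t}. cells R T)"

lemma cellCov_eq_coverage:
  "cellCov Rs T S Us = real (coverage (tuple_cells Rs T Us) S) / real (upcov Rs T)"
proof -
  have "(\<Union>R\<in>{R\<in>Rs. rule_covered R S Us}. cells R T) = \<Union>(tuple_cells Rs T Us ` S)"
    unfolding tuple_cells_def rule_covered_def by blast
  then show ?thesis unfolding cellCov_def coverage_def by simp
qed

lemma finite_tuple_cells:
  assumes "well_formed_table U D T" and "\<forall>R\<in>Rs. well_formed_rule U D R"
  shows "finite (\<Union>(range (tuple_cells Rs T Us)))"
proof (rule finite_subset)
  show "\<Union>(range (tuple_cells Rs T Us)) \<subseteq> T \<times> U"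
    using assms(2)
    unfolding tuple_cells_def cells_def rule_cols_def well_formed_rule_def by fastforce
  show "finite (T \<times> U)" using assms(1) by (simp add: well_formed_table_def)
qed

lemma greedy_result_iff_greedy_chain:
  "greedy_result Rs T Us k S \<longleftrightarrow>
     (\<exists>f. greedy_chain (proj Us ` T) (\<lambda>S. cellCov Rs T S Us) k f \<and> S = f k)"
  unfolding greedy_result_def greedy_chain_def by blast

lemma greedy_result_exists:
  assumes "finite T" and "k \<le> card (proj Us ` T)"
  shows "\<exists>S. greedy_result Rs T Us k S"
  using greedy_chain_exists[OF finite_imageI[OF assms(1)] assms(2)]
  unfolding greedy_result_iff_greedy_chain by blast

lemma greedy_result_is_subtable:
  assumes "greedy_result Rs T Us k S" and "Us \<subseteq> U" and "card Us = l"
  shows "is_subtable_of_size U T k l S Us"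
  using assms greedy_chain_subset_card[of _ _ k _ k]
  unfolding greedy_result_iff_greedy_chain is_subtable_of_size_def is_subtable_def by blast

lemma greedy_result_approximation:
  assumes wfT: "well_formed_table U D T" and wfR: "\<forall>R\<in>Rs. well_formed_rule U D R"
    and greedy: "greedy_result Rs T Us k S"
    and S': "S' \<subseteq> proj Us ` T" "card S' = k"
  shows "(1 - 1 / exp 1) * cellCov Rs T S' Us \<le> cellCov Rs T S Us"
proof -
  obtain f where chain: "greedy_chain (proj Us ` T) (\<lambda>S. cellCov Rs T S Us) k f" and "S = f k"
    using greedy unfolding greedy_result_iff_greedy_chain by blast
  have fin_cells: "finite (\<Union>(range (tuple_cells Rs T Us)))"
    by (rule finite_tuple_cells[OF wfT wfR])
  have "finite S'"
    using S'(1) wfT by (auto intro: finite_subset simp: well_formed_table_def)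
  show ?thesis
    unfolding \<open>S = f k\<close>
  proof (rule greedy_chain_approximation[OF chain _ _ _ S'(1) \<open>finite S'\<close> S'(2)])
    show "mono (\<lambda>S. cellCov Rs T S Us)"
      unfolding cellCov_eq_coverage by (rule mono_scaled_coverage[OF fin_cells]) simp
    show "0 \<le> cellCov Rs T {} Us"
      by (simp add: cellCov_def)
    show "cellCov Rs T S' Us \<le> cellCov Rs T X Us +
            (\<Sum>s\<in>S' - X. cellCov Rs T (insert s X) Us - cellCov Rs T X Us)" for X
      unfolding cellCov_eq_coverage
      by (rule scaled_coverage_le_sum_gains[OF fin_cells \<open>finite S'\<close>]) simp
  qed
qed

lemma opt_cell_cover_attained:
  assumes "well_formed_table U D T" and "is_subtable_of_size U T k l S Us"
  obtains Sopt Uopt where "is_subtable_of_size U T k l Sopt Uopt"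
    and "opt_cell_cover U Rs T k l = cellCov Rs T Sopt Uopt"
proof -
  define P where "P = {cellCov Rs T S Us | S Us. is_subtable_of_size U T k l S Us}"
  define Y where "Y = (\<Union>Us\<in>Pow U. proj Us ` T)"
  have "finite U" "finite T" using assms(1) by (auto simp: well_formed_table_def)
  then have "finite (Pow Y \<times> Pow U)" by (simp add: Y_def)
  moreover have "P \<subseteq> (\<lambda>(S, Us). cellCov Rs T S Us) ` (Pow Y \<times> Pow U)"
    unfolding P_def Y_def is_subtable_of_size_def is_subtable_def by force
  ultimately have "finite P" by (meson finite_imageI finite_subset)
  moreover have "P \<noteq> {}" using assms(2) by (auto simp: P_def)
  ultimately have "Max P \<in> P" by (rule Max_in)
  then show ?thesis using that unfolding P_def opt_cell_cover_def by blast
qed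

theorem proposition4p3:
  fixes U :: "'c set" and D :: "'c \<Rightarrow> 'v set" and T :: "('c,'v) tuple set"
    and Rs :: "('c,'v) rule set" and k l :: nat
    and g :: "'c set \<Rightarrow> ('c,'v) tuple set" and Ustar :: "'c set"
  assumes wfT: "well_formed_table U D T"
    and wfR: "\<forall>R\<in>Rs. well_formed_rule U D R"
    and l_le: "l \<le> card U"
    and g_greedy: "\<forall>U'. U' \<subseteq> U \<and> card U' = l \<and> (\<exists>S. greedy_result Rs T U' k S)
                      \<longrightarrow> greedy_result Rs T U' k (g U')"
    and Ustar_cand: "Ustar \<subseteq> U" "card Ustar = l" "\<exists>S. greedy_result Rs T Ustar k S"
    and Ustar_best: "\<forall>U'. U' \<subseteq> U \<and> card U' = l \<and> (\<exists>S. greedy_result Rs T U' k S)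
                      \<longrightarrow> cellCov Rs T (g U') U' \<le> cellCov Rs T (g Ustar) Ustar"
  shows "is_subtable_of_size U T k l (g Ustar) Ustar \<and>
         cellCov Rs T (g Ustar) Ustar \<ge> (1 - 1 / exp 1) * opt_cell_cover U Rs T k l"
proof -
  have out: "is_subtable_of_size U T k l (g Ustar) Ustar"
    using g_greedy Ustar_cand by (intro greedy_result_is_subtable) auto
  obtain Sopt Uopt where opt: "is_subtable_of_size U T k l Sopt Uopt"
    and opt_eq: "opt_cell_cover U Rs T k l = cellCov Rs T Sopt Uopt"
    using opt_cell_cover_attained[OF wfT out] .
  then have Uopt: "Uopt \<subseteq> U" "card Uopt = l" "Sopt \<subseteq> proj Uopt ` T" "card Sopt = k"
    unfolding is_subtable_of_size_def is_subtable_def by auto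
  have "finite T" using wfT by (simp add: well_formed_table_def)
  then have runs: "\<exists>S. greedy_result Rs T Uopt k S"
    using Uopt(3,4) by (intro greedy_result_exists) (auto intro: card_mono)
  then have "greedy_result Rs T Uopt k (g Uopt)" using g_greedy Uopt by blast
  then have "(1 - 1 / exp 1) * opt_cell_cover U Rs T k l \<le> cellCov Rs T (g Uopt) Uopt"
    unfolding opt_eq by (rule greedy_result_approximation[OF wfT wfR _ Uopt(3,4)])
  also have "\<dots> \<le> cellCov Rs T (g Ustar) Ustar" using Ustar_best Uopt runs by blast
  finally show ?thesis using out by simp
qed

end
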